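(* Let $n\ge2$. (1) The set $X=\overline{(1+2^n)^{\mathbb{N}}}$ equals $1+2^n\mathbb{N}_0$ and $i(X)=2^{n-1}$. (2) The set $Y=\overline{(-1+2^n)^{\mathbb{N}}}$ equals $(1+2^{n+1}\mathbb{N}_0)\cup(2^n-1+2^{n+1}\mathbb{N}_0)$ and $i(Y)=2^{n-1}$.
   Context: $\mathbb{N}=\{1,2,\dots\}$, $\mathbb{N}_0=\{0\}\cup\mathbb{N}$, $x^{\mathbb{N}}=\{x^k:k\in\mathbb{N}\}$. Closures are taken in the $2$-adic topology on $\mathbb{N}\setminus2\mathbb{N}$ (generated by the sets $x+2^m\mathbb{N}_0$). $\mathbb{Z}_{2^m}^\times$ is the unit group of $\mathbb{Z}/2^m\mathbb{Z}$, $\pi_m:\mathbb{N}\to\mathbb{Z}/2^m\mathbb{Z}$, $x\mapsto x+2^m\mathbb{Z}$. For $X$ of the form $\overline{b^{\mathbb{N}}}$ with $b$ odd, $b\ne1$: $n(X)=\min\{m\in\mathbb{N}:X=\pi_m^{-1}(\pi_m(X)),\ |\pi_m(X)|\ge3\}$ and $i(X)$ is the index of $\pi_{n(X)}(X)$ in $\mathbb{Z}_{2^{n(X)}}^\times$. *)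

theory Defs
  imports "HOL-Number_Theory.Number_Theory"
begin

definition pows :: "nat \<Rightarrow> nat set" where
  "pows b = {b ^ k | k. k \<ge> 1}"

text \<open>Closure in the 2-adic topology on the odd positive integers:
  y is in the closure of S iff every 2-adic neighbourhood y + 2^m Z of y meets S.\<close>
definition two_adic_closure :: "nat set \<Rightarrow> nat set" where
  "two_adic_closure S = {y. odd y \<and> (\<forall>m::nat. \<exists>s\<in>S. [s = y] (mod 2 ^ m))}"

definition pi_img :: "nat \<Rightarrow> nat set \<Rightarrow> nat set" where
  "pi_img m X = (\<lambda>x. x mod 2 ^ m) ` X"

definition pi_preimage :: "nat \<Rightarrow> nat set \<Rightarrow> nat set" where
  "pi_preimage m A = {x. x \<ge> 1 \<and> x mod 2 ^ m \<in> A}"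

definition units_mod :: "nat \<Rightarrow> nat set" where
  "units_mod m = {u. u < 2 ^ m \<and> coprime u (2 ^ m)}"

definition n_of :: "nat set \<Rightarrow> nat" where
  "n_of X = (LEAST m. m \<ge> 1 \<and> X = pi_preimage m (pi_img m X) \<and> card (pi_img m X) \<ge> 3)"

definition i_of :: "nat set \<Rightarrow> nat" where
  "i_of X = card (units_mod (n_of X)) div card (pi_img (n_of X) X)"

end

(* If a = 1 + 2^t c with c odd and t >= 2, then a^(2^j) = 1 + 2^(t+j) c' with c' odd.
   Hence, for odd u and y = u (mod 2^t), the binary digits of u a^k can be corrected one
   at a time: the orbit u a^N is 2-adically dense in the class u + 2^t N_0 that contains it.
   This gives the closure of (1 + 2^n)^N directly, and that of b^N for b = 2^n - 1 by
   splitting into the even powers, which are the powers of b^2 = 1 + 2^(n+1) (2^(n-1) - 1),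
   and the odd ones.  Both closures consist of 2 classes modulo 2^(n+1) and 4 modulo
   2^(n+2), so n(X) = n(Y) = n + 2 and the index is 2^(n+1) / 4 = 2^(n-1). *)

theory Submission
  imports Defs
begin

lemma power_pow2_one_plus_odd_multiple:
  fixes c :: int
  assumes "2 \<le> t" "odd c"
  shows "\<exists>c'. odd c' \<and> (1 + 2^t * c) ^ (2^j) = 1 + 2^(t + j) * c'"
proof (induction j)
  case 0
  show ?case using assms(2) by auto
next
  case (Suc j)
  then obtain c' where "odd c'" and c': "(1 + 2^t * c) ^ (2^j) = 1 + 2^(t + j) * c'"
    by blast
  define r where "r = t + j - 1"
  have r: "t + j = Suc r" "1 \<le> r" using assms(1) by (simp_all add: r_def)
  have "(1 + 2^t * c) ^ (2^Suc j) = ((1 + 2^t * c) ^ (2^j))^2"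
    by (simp add: mult.commute flip: power_mult)
  also have "\<dots> = 1 + 2^(t + Suc j) * (c' + 2^r * c'^2)"
    unfolding c' using r(1) by (simp add: power2_eq_square algebra_simps power_add)
  finally show ?case using \<open>odd c'\<close> r(2) by (intro exI[of _ "c' + 2^r * c'^2"]) simp
qed

lemma orbit_of_one_plus_pow2_approximates:
  fixes c u y :: int
  assumes "2 \<le> t" "odd c" "odd u" "[u = y] (mod 2^t)"
  shows "\<exists>k\<ge>1. [u * (1 + 2^t * c) ^ k = y] (mod 2^m)"
proof (induction m)
  case 0
  show ?case by auto
next
  case (Suc m)
  define a where "a = 1 + 2^t * c"
  show ?case
  proof (cases "Suc m \<le> t")
    case True
    have "[u * a = u * 1] (mod 2^t)"
      unfolding a_def by (intro cong_mult cong_refl) (simp add: cong_iff_dvd_diff)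
    then have "[u * a ^ 1 = y] (mod 2^t)" using assms(4) by (simp add: cong_trans)
    then have "[u * a ^ 1 = y] (mod 2^Suc m)"
      using True by (meson cong_dvd_modulus le_imp_power_dvd)
    then show ?thesis unfolding a_def by blast
  next
    case False
    obtain k q where "1 \<le> k" and q: "u * a ^ k - y = 2^m * q"
      using Suc.IH unfolding a_def cong_iff_dvd_diff by (auto elim!: dvdE)
    show ?thesis
    proof (cases "even q")
      case True
      then have "[u * a ^ k = y] (mod 2^Suc m)"
        using q by (auto simp: cong_iff_dvd_diff elim!: evenE)
      then show ?thesis using \<open>1 \<le> k\<close> unfolding a_def by blast
    next
      case False
      \<comment> \<open>The next binary digit is wrong; multiplying by \<open>a^(2^(m-t)) = 1 + 2^m c'\<close>,
        with \<open>c'\<close> odd, fixes it.\<close>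
      obtain c' where "odd c'" and c': "a ^ (2^(m - t)) = 1 + 2^m * c'"
        using power_pow2_one_plus_odd_multiple[OF assms(1,2), of "m - t"] \<open>\<not> Suc m \<le> t\<close>
        unfolding a_def by auto
      have "u * a ^ (k + 2^(m - t)) - y = (u * a ^ k - y) + 2^m * (u * a ^ k * c')"
        by (simp add: power_add c' algebra_simps)
      also have "\<dots> = 2^m * (q + u * a ^ k * c')"
        by (simp add: q algebra_simps)
      finally have "u * a ^ (k + 2^(m - t)) - y = 2^m * (q + u * a ^ k * c')" .
      moreover have "even (q + u * a ^ k * c')"
        using False \<open>odd c'\<close> assms(1,3) by (simp add: a_def)
      ultimately have "[u * a ^ (k + 2^(m - t)) = y] (mod 2^Suc m)"
        by (auto simp: cong_iff_dvd_diff elim!: evenE)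
      then show ?thesis using \<open>1 \<le> k\<close> unfolding a_def by (meson le_add1 order_trans)
    qed
  qed
qed

lemma power_in_pows: "1 \<le> k \<Longrightarrow> b ^ k \<in> pows b"
  unfolding pows_def by blast

lemma two_adic_closure_subset_pi_preimage:
  assumes "\<And>s. s \<in> S \<Longrightarrow> s mod 2^t \<in> R"
  shows "two_adic_closure S \<subseteq> pi_preimage t R"
proof
  fix y assume "y \<in> two_adic_closure S"
  then obtain s where "odd y" "s \<in> S" "[s = y] (mod 2^t)"
    unfolding two_adic_closure_def by blast
  then show "y \<in> pi_preimage t R"
    using assms[of s] unfolding pi_preimage_def cong_def by (auto simp: odd_pos Suc_le_eq)
qed

lemma pi_preimage_subset_two_adic_closure:
  fixes a c u :: nat
  assumes "2 \<le> t" "a = 1 + 2^t * c" "odd c" "odd u"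
    and orbit: "\<And>k. 1 \<le> k \<Longrightarrow> u * a ^ k \<in> S"
  shows "pi_preimage t {u mod 2^t} \<subseteq> two_adic_closure S"
proof
  fix y assume "y \<in> pi_preimage t {u mod 2^t}"
  then have uy: "[u = y] (mod 2^t)" unfolding pi_preimage_def cong_def by simp
  have "[u = y] (mod 2)" by (rule cong_dvd_modulus_nat[OF uy]) (use assms(1) in simp)
  then have "odd y" using \<open>odd u\<close> by (simp add: cong_def odd_iff_mod_2_eq_one)
  moreover have "\<exists>s\<in>S. [s = y] (mod 2^m)" for m
  proof -
    have "[int u = int y] (mod 2^t)" using uy by (metis cong_int_iff of_nat_numeral of_nat_power)
    then obtain k where "1 \<le> k" and k: "[int u * (1 + 2^t * int c) ^ k = int y] (mod 2^m)"
      using orbit_of_one_plus_pow2_approximates[OF assms(1), of "int c" "int u" "int y" m] assms(3,4)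
      by auto
    have "int (u * a ^ k) = int u * (1 + 2^t * int c) ^ k" by (simp add: assms(2))
    then have "[u * a ^ k = y] (mod 2^m)" using k by (metis cong_int_iff of_nat_numeral of_nat_power)
    then show ?thesis using orbit[OF \<open>1 \<le> k\<close>] by blast
  qed
  ultimately show "y \<in> two_adic_closure S" unfolding two_adic_closure_def by blast
qed

lemma pi_preimage_Un: "pi_preimage t (A \<union> B) = pi_preimage t A \<union> pi_preimage t B"
  unfolding pi_preimage_def by auto

lemma two_adic_closure_pows_one_plus_pow2:
  assumes "2 \<le> t" "odd c"
  shows "two_adic_closure (pows (1 + 2^t * c)) = pi_preimage t {1}"
proof
  have one: "(1::nat) mod 2^t = 1" using assms(1) by simp
  have "[1 + 2^t * c = 1] (mod 2^t)" unfolding cong_def by (rule mod_mult_self2)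
  then have "[(1 + 2^t * c) ^ k = 1 ^ k] (mod 2^t)" for k by (rule cong_pow)
  then show "two_adic_closure (pows (1 + 2^t * c)) \<subseteq> pi_preimage t {1}"
    using assms(1) by (intro two_adic_closure_subset_pi_preimage) (auto simp: pows_def cong_def)
  have "pi_preimage t {1 mod 2^t} \<subseteq> two_adic_closure (pows (1 + 2^t * c))"
    by (rule pi_preimage_subset_two_adic_closure[OF assms(1) refl assms(2)]) (simp_all add: power_in_pows)
  then show "pi_preimage t {1} \<subseteq> two_adic_closure (pows (1 + 2^t * c))"
    by (simp only: one)
qed

lemma two_adic_closure_pows_of_square:
  assumes "2 \<le> t" "b^2 = 1 + 2^t * c" "odd c"
  shows "two_adic_closure (pows b) = pi_preimage t {1, b mod 2^t}"
proof
  have one: "(1::nat) mod 2^t = 1" using assms(1) by simp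
  have "odd (b^2)" unfolding assms(2) using assms(1) by simp
  then have "odd b" by simp
  have "[b^2 = 1] (mod 2^t)" unfolding assms(2) cong_def by (rule mod_mult_self2)
  then have sq: "[(b^2) ^ j = 1] (mod 2^t)" for j using cong_pow[of "b^2" 1 "2^t" j] by simp
  have residues: "b ^ k mod 2^t \<in> {1, b mod 2^t}" for k
  proof (cases "even k")
    case True
    then obtain j where "k = 2 * j" by (elim evenE)
    then have "[b ^ k = 1] (mod 2^t)" using sq[of j] by (simp only: power_mult)
    then show ?thesis using one by (simp add: cong_def)
  next
    case False
    then obtain j where "k = Suc (2 * j)" by (elim oddE) simp
    then have "[b ^ k = b * 1] (mod 2^t)"
      using cong_scalar_left[OF sq[of j], of b] by (simp only: power_Suc power_mult)
    then show ?thesis by (simp add: cong_def)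
  qed
  show "two_adic_closure (pows b) \<subseteq> pi_preimage t {1, b mod 2^t}"
    by (rule two_adic_closure_subset_pi_preimage) (use residues in \<open>auto simp: pows_def\<close>)
  have "pi_preimage t {1 mod 2^t} \<subseteq> two_adic_closure (pows b)"
  proof (rule pi_preimage_subset_two_adic_closure[OF assms(1,2,3)])
    show "1 * (b^2) ^ k \<in> pows b" if "1 \<le> k" for k
      using power_in_pows[of "2 * k"] that by (simp only: power_mult) simp
  qed simp
  moreover have "pi_preimage t {b mod 2^t} \<subseteq> two_adic_closure (pows b)"
  proof (rule pi_preimage_subset_two_adic_closure[OF assms(1,2,3) \<open>odd b\<close>])
    show "b * (b^2) ^ k \<in> pows b" for k
      using power_in_pows[of "Suc (2 * k)"] by (simp only: power_Suc power_mult)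
  qed
  moreover have "{1, b mod 2^t} = {1 mod 2^t} \<union> {b mod 2^t}" using one by auto
  ultimately show "pi_preimage t {1, b mod 2^t} \<subseteq> two_adic_closure (pows b)"
    by (simp only: pi_preimage_Un Un_least)
qed

lemma pi_preimage_pi_img_pi_preimage:
  assumes "t \<le> m"
  shows "pi_preimage m (pi_img m (pi_preimage t R)) = pi_preimage t R"
proof -
  have mod_mod: "x mod 2^m mod 2^t = x mod 2^t" for x :: nat
    using assms by (simp add: mod_mod_cancel le_imp_power_dvd)
  show ?thesis
  proof (intro equalityI subsetI)
    fix x assume "x \<in> pi_preimage m (pi_img m (pi_preimage t R))"
    then obtain x' where "1 \<le> x" "x' \<in> pi_preimage t R" "x mod 2^m = x' mod 2^m"
      unfolding pi_preimage_def pi_img_def by auto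
    then show "x \<in> pi_preimage t R"
      unfolding pi_preimage_def by (metis (mono_tags) mem_Collect_eq mod_mod)
  qed (auto simp: pi_preimage_def pi_img_def)
qed

lemma pi_img_pi_preimage:
  assumes "t \<le> m"
  shows "pi_img m (pi_preimage t R) = {z. z < 2^m \<and> z mod 2^t \<in> R}"
proof (intro equalityI subsetI)
  have mod_mod: "x mod 2^m mod 2^t = x mod 2^t" for x :: nat
    using assms by (simp add: mod_mod_cancel le_imp_power_dvd)
  fix z
  show "z \<in> pi_img m (pi_preimage t R) \<Longrightarrow> z \<in> {z. z < 2^m \<and> z mod 2^t \<in> R}"
    by (auto simp: pi_img_def pi_preimage_def mod_mod)
  assume "z \<in> {z. z < 2^m \<and> z mod 2^t \<in> R}"
  then have "z + 2^m \<in> pi_preimage t R" "z = (z + 2^m) mod 2^m"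
    using mod_mod[of "z + 2^m"] by (simp_all add: pi_preimage_def)
  then show "z \<in> pi_img m (pi_preimage t R)" unfolding pi_img_def by blast
qed

lemma card_residues_lifting:
  fixes R :: "nat set"
  assumes "R \<subseteq> {..<2^t}"
  shows "card {z. z < 2^(t + j) \<and> z mod 2^t \<in> R} = card R * 2^j"
proof -
  define f where "f = (\<lambda>(r, i). r + 2^t * i :: nat)"
  have "{z. z < 2^(t + j) \<and> z mod 2^t \<in> R} = f ` (R \<times> {..<2^j})"
  proof (intro equalityI subsetI)
    fix z assume z: "z \<in> {z. z < 2^(t + j) \<and> z mod 2^t \<in> R}"
    then have "z div 2^t < 2^j" by (simp add: less_mult_imp_div_less power_add mult.commute)
    moreover have "z = f (z mod 2^t, z div 2^t)" by (simp add: f_def)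
    ultimately show "z \<in> f ` (R \<times> {..<2^j})" using z by blast
  next
    fix z assume "z \<in> f ` (R \<times> {..<2^j})"
    then obtain r i where "r \<in> R" "i < 2^j" "z = r + 2^t * i" by (auto simp: f_def)
    moreover have "r + 2^t * i < 2^t * 2^j"
    proof -
      have "r + 2^t * i < 2^t * Suc i" using \<open>r \<in> R\<close> assms by auto
      also have "\<dots> \<le> 2^t * 2^j" using \<open>i < 2^j\<close> by (intro mult_le_mono2) simp
      finally show ?thesis .
    qed
    ultimately show "z \<in> {z. z < 2^(t + j) \<and> z mod 2^t \<in> R}"
      using assms by (auto simp: power_add)
  qed
  moreover have "inj_on f (R \<times> {..<2^j})"
  proof (rule inj_onI, clarify)
    have digits: "(r + 2^t * i) mod 2^t = r \<and> (r + 2^t * i) div 2^t = i" if "r < 2^t" for r i :: nat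
      using that by simp
    fix r i r' i' assume "r \<in> R" "r' \<in> R" "f (r, i) = f (r', i')"
    then show "r = r' \<and> i = i'"
      using assms digits unfolding f_def by (metis case_prod_conv lessThan_iff subsetD)
  qed
  ultimately show ?thesis by (simp add: card_image card_cartesian_product)
qed

lemma card_pi_img_pi_preimage:
  assumes "R \<subseteq> {..<2^t}"
  shows "card (pi_img (t + j) (pi_preimage t R)) = card R * 2^j"
  using card_residues_lifting[OF assms] by (simp add: pi_img_pi_preimage)

lemma card_pi_img_mono:
  assumes "m \<le> M"
  shows "card (pi_img m X) \<le> card (pi_img M X)"
proof -
  have "pi_img m X = (\<lambda>z. z mod 2^m) ` pi_img M X"
    using assms by (simp add: pi_img_def image_image mod_mod_cancel le_imp_power_dvd)
  moreover have "finite (pi_img M X)"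
    by (rule finite_subset[of _ "{..<2^M}"]) (auto simp: pi_img_def)
  ultimately show ?thesis by (simp add: card_image_le)
qed

lemma n_of_pi_preimage:
  assumes "R \<subseteq> {..<2^t}" "card R * 2^j \<le> 2" "3 \<le> card R * 2^(j + 1)"
  shows "n_of (pi_preimage t R) = t + j + 1"
  unfolding n_of_def
proof (rule Least_equality)
  show "1 \<le> t + j + 1 \<and>
      pi_preimage t R = pi_preimage (t + j + 1) (pi_img (t + j + 1) (pi_preimage t R)) \<and>
      3 \<le> card (pi_img (t + j + 1) (pi_preimage t R))"
    using assms(3) card_pi_img_pi_preimage[OF assms(1), of "j + 1"]
      pi_preimage_pi_img_pi_preimage[of t "t + j + 1" R]
    by (simp add: add.assoc)
next
  fix m
  assume m: "1 \<le> m \<and> pi_preimage t R = pi_preimage m (pi_img m (pi_preimage t R)) \<and>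
      3 \<le> card (pi_img m (pi_preimage t R))"
  show "t + j + 1 \<le> m"
  proof (rule ccontr)
    assume "\<not> t + j + 1 \<le> m"
    then have "card (pi_img m (pi_preimage t R)) \<le> card (pi_img (t + j) (pi_preimage t R))"
      by (intro card_pi_img_mono) simp
    also have "\<dots> = card R * 2^j" by (rule card_pi_img_pi_preimage[OF assms(1)])
    finally show False using m assms(2) by simp
  qed
qed

lemma card_units_mod: "1 \<le> m \<Longrightarrow> card (units_mod m) = 2^(m - 1)"
proof -
  assume "1 \<le> m"
  then have "units_mod m = totatives (2^m)"
    unfolding units_mod_def totatives_def by (auto simp: odd_pos le_less)
  then have "card (units_mod m) = totient (2^m)" by (simp add: totient_def)
  also have "\<dots> = 2^(m - 1)" using \<open>1 \<le> m\<close> by (simp add: totient_prime_power)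
  finally show ?thesis .
qed

lemma i_of_pi_preimage:
  assumes "R \<subseteq> {..<2^t}" "card R * 2^j \<le> 2" "3 \<le> card R * 2^(j + 1)"
  shows "i_of (pi_preimage t R) = 2^(t + j) div (card R * 2^(j + 1))"
  using card_units_mod[of "t + j + 1"] card_pi_img_pi_preimage[OF assms(1), of "j + 1"]
  unfolding i_of_def n_of_pi_preimage[OF assms] by (simp add: add.assoc)

lemma arith_progression_eq_pi_preimage:
  assumes "0 < r" "r < 2^t"
  shows "{r + 2^t * k | k. True} = pi_preimage t {r}"
proof (intro equalityI subsetI)
  fix x assume "x \<in> pi_preimage t {r}"
  then have "x = r + 2^t * (x div 2^t)" unfolding pi_preimage_def
    by (metis div_mult_mod_eq add.commute mult.commute singletonD mem_Collect_eq)
  then show "x \<in> {r + 2^t * k | k. True}" by blast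
qed (use assms in \<open>auto simp: pi_preimage_def\<close>)

lemma square_pow2_minus_one:
  assumes "2 \<le> n"
  shows "(2^n - 1)^2 = 1 + 2^(n + 1) * (2^(n - 1) - 1 :: nat)"
proof -
  obtain m where n: "n = Suc m" and "1 \<le> m" using assms by (cases n) auto
  have "2 \<le> (2::nat)^m" using power_increasing[OF \<open>1 \<le> m\<close>, of "2::nat"] by simp
  then obtain x where "(2::nat)^m = Suc x" by (cases "(2::nat)^m") auto
  then show ?thesis unfolding n by (simp add: power2_eq_square algebra_simps)
qed

theorem lemma4p7:
  fixes n :: nat
  assumes "n \<ge> 2"
  shows "two_adic_closure (pows (1 + 2 ^ n)) = {1 + 2 ^ n * k | k. True}
         \<and> i_of (two_adic_closure (pows (1 + 2 ^ n))) = 2 ^ (n - 1)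
         \<and> two_adic_closure (pows (2 ^ n - 1)) =
             {1 + 2 ^ (n + 1) * k | k. True} \<union> {2 ^ n - 1 + 2 ^ (n + 1) * k | k. True}
         \<and> i_of (two_adic_closure (pows (2 ^ n - 1))) = 2 ^ (n - 1)"
proof -
  define b :: nat where "b = 2^n - 1"
  have "4 \<le> (2::nat)^n" using power_increasing[OF assms, of "2::nat"] by simp
  then have "1 < b" "b < 2^(n + 1)" "(1::nat) < 2^n" unfolding b_def by auto
  have "odd (2^(n - 1) - 1 :: nat)" using assms by simp
  have four: "2^(n + 1) div (2 * 2) = (2::nat)^(n - 1)"
    using assms by (cases n) simp_all
  have X: "two_adic_closure (pows (1 + 2^n)) = pi_preimage n {1}"
    using two_adic_closure_pows_one_plus_pow2[OF assms, of 1] by simp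
  have Y: "two_adic_closure (pows b) = pi_preimage (n + 1) {1, b}"
    using two_adic_closure_pows_of_square[OF _ square_pow2_minus_one[OF assms]] assms
      \<open>odd (2^(n - 1) - 1)\<close> \<open>b < 2^(n + 1)\<close> unfolding b_def by simp
  have "{1 + 2^n * k | k. True} = pi_preimage n {1}"
    using arith_progression_eq_pi_preimage[of 1 n] \<open>1 < 2^n\<close> by simp
  moreover have "{1 + 2^(n + 1) * k | k. True} \<union> {b + 2^(n + 1) * k | k. True} =
      pi_preimage (n + 1) {1, b}"
    using arith_progression_eq_pi_preimage[of 1 "n + 1"] arith_progression_eq_pi_preimage[of b "n + 1"]
      pi_preimage_Un[of "n + 1" "{1}" "{b}"] \<open>1 < b\<close> \<open>b < 2^(n + 1)\<close>
    by (simp add: insert_commute)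
  moreover have "i_of (pi_preimage n {1}) = 2^(n - 1)"
    using i_of_pi_preimage[of "{1}" n 1] \<open>1 < 2^n\<close> four by simp
  moreover have "i_of (pi_preimage (n + 1) {1, b}) = 2^(n - 1)"
    using i_of_pi_preimage[of "{1, b}" "n + 1" 0] \<open>1 < b\<close> \<open>b < 2^(n + 1)\<close> four by simp
  ultimately show ?thesis using X Y unfolding b_def by simp
qed
end
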